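(* Let $p(x) \in \mathbb{R}[x]$ be a non-constant real-rooted polynomial. Let $P(x) = \int_0^x p(y)\,dy$ and let $C \in \mathbb{R}$. Then $P(x)+C$ is real-rooted if and only if for every root $\mu$ of $p(x)$ we have: $P(\mu)+C \geq 0$ if $p'(\mu) < 0$; $P(\mu)+C \leq 0$ if $p'(\mu) > 0$; and $P(\mu)+C = 0$ if $p'(\mu) = 0$.
   Context: A nonzero polynomial $p(x) \in \mathbb{R}[x]$ is called real-rooted if every complex root of $p(x)$ is real. $p'(x)$ denotes the derivative of $p(x)$. *)

theory Defs
  imports "HOL-Computational_Algebra.Polynomial"
begin

definition real_rooted :: "real poly \<Rightarrow> bool" where
  "real_rooted p \<longleftrightarrow> p \<noteq> 0 \<and>
     (\<forall>z::complex. poly (map_poly complex_of_real p) z = 0 \<longrightarrow> z \<in> \<real>)"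

end

theory Submission
  imports Defs "HOL-Computational_Algebra.Fundamental_Theorem_Algebra"
begin

text \<open>
  Put \<open>Q = P + C\<close>, so that \<open>Q' = p\<close>. If \<open>Q\<close> is real-rooted, Laguerre's inequality
  \<open>Q Q'' < Q'\<^sup>2\<close>, valid wherever \<open>Q\<close> does not vanish, gives \<open>Q(\<mu>) p'(\<mu>) < 0\<close> at every root
  \<open>\<mu>\<close> of \<open>p\<close> with \<open>Q(\<mu>) \<noteq> 0\<close>, which is the sign condition.

  Conversely, count real roots with multiplicity. A common root of \<open>p\<close> and \<open>Q\<close> has multiplicity
  one higher in \<open>Q\<close> than in \<open>p\<close>. By the sign condition, every root \<open>t\<close> of \<open>p\<close> with
  \<open>Q(t) \<noteq> 0\<close> is simple and a strict local extremum of \<open>Q\<close> on the far side of the axis (a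
  positive maximum or a negative minimum). Hence strictly between two consecutive such \<open>t\<close>, as
  well as beyond the largest and below the smallest, \<open>Q\<close> or \<open>p\<close> has a root, and a root of \<open>p\<close>
  there is again a root of \<open>Q\<close>. So \<open>Q\<close> has more distinct real roots than there are such \<open>t\<close>,
  which makes the multiplicities of the real roots of \<open>Q\<close> add up to \<open>deg Q\<close>.
\<close>

section \<open>Real-rooted polynomials and their real roots\<close>

lemma map_poly_of_real_mult:
  fixes p q :: "real poly"
  shows "map_poly (of_real :: real \<Rightarrow> 'a::{real_algebra_1,comm_ring_1}) (p * q) =
    map_poly of_real p * map_poly of_real q"
  by (simp add: poly_eq_iff coeff_map_poly coeff_mult)

lemma poly_map_poly_of_real:
  "poly (map_poly of_real p) (of_real x :: 'a::{real_algebra_1,comm_ring_1}) = of_real (poly p x)"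
  by (induction p) (auto simp: map_poly_pCons)

lemma real_rooted_linear_mult_iff: "real_rooted ([:-a, 1:] * g) \<longleftrightarrow> real_rooted g"
proof -
  have "poly (map_poly complex_of_real ([:-a, 1:] * g)) z = (z - of_real a) * poly (map_poly of_real g) z"
    for z
    by (simp only: map_poly_of_real_mult poly_mult) (simp add: map_poly_pCons)
  then show ?thesis
    by (auto simp: real_rooted_def simp del: mult_pCons_left)
qed

lemma real_rooted_const_iff: "degree f = 0 \<Longrightarrow> real_rooted f \<longleftrightarrow> f \<noteq> 0"
  by (elim degree_eq_zeroE) (auto simp: real_rooted_def map_poly_pCons)

lemma real_rooted_has_root:
  assumes "real_rooted f" "degree f > 0"
  obtains x where "poly f x = 0"
proof -
  have "\<not> constant (poly (map_poly complex_of_real f))"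
    using assms(2) by (simp add: constant_degree degree_map_poly)
  then obtain z where z: "poly (map_poly complex_of_real f) z = 0"
    using fundamental_theorem_of_algebra by blast
  with assms(1) have "z \<in> \<real>"
    by (simp add: real_rooted_def)
  then obtain x where "z = of_real x"
    by (auto elim: Reals_cases)
  with z have "poly f x = 0"
    by (simp add: poly_map_poly_of_real)
  then show thesis ..
qed

lemma real_rooted_linear_factor:
  assumes "real_rooted f" "degree f > 0"
  obtains a g where "f = [:-a, 1:] * g" "real_rooted g" "degree f = Suc (degree g)"
proof -
  obtain a where "poly f a = 0"
    using assms real_rooted_has_root by blast
  then obtain g where g: "f = [:-a, 1:] * g"
    by (metis dvdE dvd_iff_poly_eq_0 minus_minus)
  then have "real_rooted g"
    using assms(1) real_rooted_linear_mult_iff by simp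
  then have "degree f = Suc (degree g)"
    by (simp add: g real_rooted_def degree_mult_eq del: mult_pCons_left)
  with g \<open>real_rooted g\<close> show thesis ..
qed

lemma sum_order_linear_mult:
  fixes g :: "'a::idom poly"
  assumes "g \<noteq> 0"
  shows "(\<Sum>x | poly ([:-a, 1:] * g) x = 0. order x ([:-a, 1:] * g)) =
    Suc (\<Sum>x | poly g x = 0. order x g)"
proof -
  let ?f = "[:-a, 1:] * g" and ?R = "{x. poly g x = 0}"
  have fin: "finite ?R"
    using poly_roots_finite[OF assms] .
  have nz: "?f \<noteq> 0"
    using assms by (simp del: mult_pCons_left)
  have lin: "order x [:-a, 1:] = (if x = a then 1 else 0)" for x
    using order_power_n_n[of a 1] by (auto intro: order_0I)
  have "order x ?f = (if x = a then 1 else 0) + order x g" for x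
    by (simp only: order_mult[OF nz] lin)
  moreover have "{x. poly ?f x = 0} = insert a ?R"
    by auto
  ultimately have "(\<Sum>x | poly ?f x = 0. order x ?f) =
      (\<Sum>x\<in>insert a ?R. if x = a then 1 else 0) + (\<Sum>x\<in>insert a ?R. order x g)"
    by (simp only: sum.distrib)
  also have "(\<Sum>x\<in>insert a ?R. order x g) = (\<Sum>x\<in>?R. order x g)"
    using fin by (cases "a \<in> ?R") (auto simp: insert_absorb order_0I)
  finally show ?thesis
    using fin by simp
qed

lemma real_rooted_iff_sum_order:
  assumes "f \<noteq> 0"
  shows "real_rooted f \<longleftrightarrow> (\<Sum>x | poly f x = 0. order x f) = degree f"
  using assms
proof (induction "degree f" arbitrary: f rule: less_induct)
  case less
  show ?case
  proof (cases "\<exists>a. poly f a = 0")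
    case True
    then obtain a where "[:-a, 1:] dvd f"
      by (auto simp: dvd_iff_poly_eq_0)
    then obtain g where g: "f = [:-a, 1:] * g"
      by (elim dvdE)
    with less.prems have "g \<noteq> 0"
      by auto
    then have deg: "degree f = Suc (degree g)"
      by (simp add: g degree_mult_eq del: mult_pCons_left)
    moreover from \<open>g \<noteq> 0\<close> deg
    have "real_rooted g \<longleftrightarrow> (\<Sum>x | poly g x = 0. order x g) = degree g"
      by (intro less.hyps) auto
    moreover have "(\<Sum>x | poly f x = 0. order x f) = Suc (\<Sum>x | poly g x = 0. order x g)"
      unfolding g using \<open>g \<noteq> 0\<close> by (rule sum_order_linear_mult)
    moreover have "real_rooted f \<longleftrightarrow> real_rooted g"
      unfolding g by (rule real_rooted_linear_mult_iff)
    ultimately show ?thesis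
      by simp
  next
    case False
    then have "real_rooted f \<longleftrightarrow> degree f = 0"
      using less.prems real_rooted_const_iff real_rooted_has_root by blast
    with False show ?thesis
      by simp
  qed
qed

lemma sum_order_roots_pderiv:
  fixes Q :: "'a::{idom,semiring_char_0} poly"
  assumes "pderiv Q \<noteq> 0"
  shows "(\<Sum>x | poly Q x = 0. order x Q) + (\<Sum>x | poly (pderiv Q) x = 0 \<and> poly Q x \<noteq> 0. order x (pderiv Q))
    = (\<Sum>x | poly (pderiv Q) x = 0. order x (pderiv Q)) + card {x. poly Q x = 0}"
proof -
  define R S where "R = {x. poly Q x = 0}" and "S = {x. poly (pderiv Q) x = 0}"
  have "Q \<noteq> 0"
    using assms by auto
  then have "finite R" "finite S"
    using assms by (simp_all add: R_def S_def poly_roots_finite)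
  have "(\<Sum>x\<in>R. order x Q) = (\<Sum>x\<in>R. Suc (order x (pderiv Q)))"
    using order_pderiv[OF \<open>Q \<noteq> 0\<close>] by (simp add: R_def)
  also have "\<dots> = (\<Sum>x\<in>R. order x (pderiv Q)) + card R"
    by (rule sum_Suc)
  also have "(\<Sum>x\<in>R. order x (pderiv Q)) = (\<Sum>x\<in>S \<inter> R. order x (pderiv Q))"
    using \<open>finite R\<close> by (intro sum.mono_neutral_right) (auto simp: S_def order_root)
  finally have "(\<Sum>x\<in>R. order x Q) = (\<Sum>x\<in>S \<inter> R. order x (pderiv Q)) + card R" .
  moreover have "(\<Sum>x\<in>S. order x (pderiv Q)) =
      (\<Sum>x\<in>S \<inter> R. order x (pderiv Q)) + (\<Sum>x\<in>S - R. order x (pderiv Q))"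
    using sum.Int_Diff[OF \<open>finite S\<close>] .
  moreover have "S - R = {x. poly (pderiv Q) x = 0 \<and> poly Q x \<noteq> 0}"
    by (auto simp: R_def S_def)
  ultimately show ?thesis
    by (simp add: R_def S_def)
qed

section \<open>Laguerre's inequality\<close>

lemma poly_laguerre_linear_mult:
  fixes g :: "'a::idom poly" and a :: 'a
  defines "f \<equiv> [:-a, 1:] * g"
  shows "poly f x * poly (pderiv (pderiv f)) x - (poly (pderiv f) x)\<^sup>2 =
    (x - a)\<^sup>2 * (poly g x * poly (pderiv (pderiv g)) x - (poly (pderiv g) x)\<^sup>2) - (poly g x)\<^sup>2"
proof -
  have d1: "pderiv f = [:-a, 1:] * pderiv g + g"
    by (simp add: f_def pderiv_mult pderiv_pCons del: mult_pCons_left)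
  have d2: "pderiv (pderiv f) = [:-a, 1:] * pderiv (pderiv g) + 2 * pderiv g"
    by (simp add: d1 pderiv_add pderiv_mult pderiv_pCons del: mult_pCons_left)
  show ?thesis
    unfolding d2 unfolding d1 by (simp add: f_def power2_eq_square algebra_simps del: mult_pCons_left)
qed

lemma laguerre_inequality:
  assumes "real_rooted f"
  shows "poly f x * poly (pderiv (pderiv f)) x \<le> (poly (pderiv f) x)\<^sup>2"
  using assms
proof (induction "degree f" arbitrary: f)
  case 0
  then have "pderiv f = 0"
    by (simp add: pderiv_eq_0_iff)
  then show ?case
    by simp
next
  case (Suc d)
  then obtain a g where g: "f = [:-a, 1:] * g" "real_rooted g" "degree g = d"
    by (metis real_rooted_linear_factor zero_less_Suc Suc_inject)
  with Suc.hyps have "poly g x * poly (pderiv (pderiv g)) x - (poly (pderiv g) x)\<^sup>2 \<le> 0"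
    by simp
  then have "(x - a)\<^sup>2 * (poly g x * poly (pderiv (pderiv g)) x - (poly (pderiv g) x)\<^sup>2) \<le> 0"
    by (simp add: mult_nonneg_nonpos)
  then show ?case
    using poly_laguerre_linear_mult[of a g x] g(1) by (smt (verit) zero_le_power2)
qed

lemma laguerre_inequality_strict:
  assumes "real_rooted f" "degree f > 0" "poly f x \<noteq> 0"
  shows "poly f x * poly (pderiv (pderiv f)) x < (poly (pderiv f) x)\<^sup>2"
proof -
  obtain a g where g: "f = [:-a, 1:] * g" "real_rooted g"
    using real_rooted_linear_factor assms(1,2) by metis
  with assms(3) have "poly g x \<noteq> 0"
    by auto
  moreover have "(x - a)\<^sup>2 * (poly g x * poly (pderiv (pderiv g)) x - (poly (pderiv g) x)\<^sup>2) \<le> 0"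
    using laguerre_inequality[OF g(2), of x] by (simp add: mult_nonneg_nonpos)
  ultimately show ?thesis
    using poly_laguerre_linear_mult[of a g x] g(1) by (smt (verit) power2_less_0 zero_less_power2)
qed

section \<open>Roots near critical points\<close>

lemma lead_coeff_pderiv:
  fixes p :: "'a::{comm_semiring_1,semiring_no_zero_divisors,semiring_char_0} poly"
  shows "lead_coeff (pderiv p) = of_nat (degree p) * lead_coeff p"
proof (cases "degree p")
  case 0
  then show ?thesis
    by (simp add: pderiv_eq_0_iff)
next
  case (Suc n)
  then show ?thesis
    by (simp add: degree_pderiv coeff_pderiv)
qed

lemma lead_coeff_pos_if_poly_pos_right:
  fixes q :: "real poly"
  assumes pos: "\<And>x. x > t \<Longrightarrow> poly q x > 0"
  shows "lead_coeff q > 0"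
proof (rule ccontr)
  assume "\<not> lead_coeff q > 0"
  moreover have "q \<noteq> 0"
    using pos[of "t + 1"] by auto
  ultimately have "lead_coeff (-q) > 0"
    by (simp add: less_le)
  then obtain n where "\<forall>x\<ge>n. poly (-q) x \<ge> lead_coeff (-q)"
    using poly_pinfty_gt_lc by blast
  with \<open>lead_coeff (-q) > 0\<close> have "poly (-q) (max n (t + 1)) > 0"
    by (meson max.cobounded1 less_le_trans)
  moreover have "poly q (max n (t + 1)) > 0"
    by (rule pos) simp
  ultimately show False
    by simp
qed

lemma poly_root_between_same_slope_roots:
  fixes p :: "real poly"
  assumes "a < b" "poly p a = 0" "poly p b = 0" "poly (pderiv p) a * poly (pderiv p) b > 0"
  shows "\<exists>x. a < x \<and> x < b \<and> poly p x = 0"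
proof -
  have root_if_increasing: "\<exists>x. a < x \<and> x < b \<and> poly q x = 0"
    if roots: "poly q a = 0" "poly q b = 0" and slopes: "poly (pderiv q) a > 0" "poly (pderiv q) b > 0"
    for q
  proof -
    obtain d where d: "d > 0" "\<forall>h>0. h < d \<longrightarrow> poly q a < poly q (a + h)"
      using DERIV_pos_inc_right[OF poly_DERIV slopes(1)] by blast
    obtain e where e: "e > 0" "\<forall>h>0. h < e \<longrightarrow> poly q (b - h) < poly q b"
      using DERIV_pos_inc_left[OF poly_DERIV slopes(2)] by blast
    define h where "h = min (min d e) (b - a) / 3"
    have h: "h > 0" "h < d" "h < e" "a + h < b - h"
      using d e assms(1) by (auto simp: h_def min_def field_simps)
    with d e roots have "poly q (a + h) > 0" "poly q (b - h) < 0"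
      by auto
    then obtain x where "a + h < x" "x < b - h" "poly q x = 0"
      using poly_IVT_neg[OF h(4)] by blast
    with h show ?thesis
      by (intro exI[of _ x]) auto
  qed
  show ?thesis
  proof (cases "poly (pderiv p) a > 0")
    case True
    with assms show ?thesis
      by (intro root_if_increasing) (auto simp: zero_less_mult_iff)
  next
    case False
    with assms have "\<exists>x. a < x \<and> x < b \<and> poly (-p) x = 0"
      by (intro root_if_increasing) (auto simp: pderiv_minus zero_less_mult_iff)
    then show ?thesis
      by simp
  qed
qed

lemma poly_root_between_critical_points:
  fixes Q :: "real poly"
  assumes "a < b" "poly (pderiv Q) a = 0" "poly (pderiv Q) b = 0"
    and "poly Q a * poly (pderiv (pderiv Q)) a < 0" "poly Q b * poly (pderiv (pderiv Q)) b < 0"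
  shows "\<exists>x. a < x \<and> x < b \<and> (poly Q x = 0 \<or> poly (pderiv Q) x = 0)"
proof (cases "poly Q a * poly Q b < 0")
  case True
  then show ?thesis
    using poly_IVT[OF assms(1)] by blast
next
  case False
  with assms(4,5) have "poly (pderiv (pderiv Q)) a * poly (pderiv (pderiv Q)) b > 0"
    by (smt (verit, best) mult_less_0_iff zero_less_mult_iff)
  then show ?thesis
    using poly_root_between_same_slope_roots[OF assms(1-3)] by blast
qed

lemma poly_root_right_of_critical_point:
  fixes Q :: "real poly"
  assumes "poly (pderiv Q) t = 0" "poly Q t * poly (pderiv (pderiv Q)) t < 0"
  shows "\<exists>x>t. poly Q x = 0 \<or> poly (pderiv Q) x = 0"
proof -
  have root_if_max: "\<exists>x>t. poly q x = 0 \<or> poly (pderiv q) x = 0"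
    if crit: "poly (pderiv q) t = 0" and max: "poly q t > 0" "poly (pderiv (pderiv q)) t < 0" for q
  proof (rule ccontr)
    txt \<open>\<open>q'\<close> is negative just right of \<open>t\<close>, but eventually has the sign of the leading
      coefficient of \<open>q\<close>, which is positive because \<open>q > 0\<close> on \<open>(t, \<infinity>)\<close>.\<close>
    assume "\<not> ?thesis"
    then have no_root: "poly q x \<noteq> 0" and no_crit: "poly (pderiv q) x \<noteq> 0" if "x > t" for x
      using that by auto
    have "poly q x > 0" if "x > t" for x
      using poly_IVT_neg[OF that max(1)] no_root that by force
    then have "lead_coeff q > 0"
      by (rule lead_coeff_pos_if_poly_pos_right)
    moreover have "degree q \<noteq> 0"
      using max(2) by (metis less_irrefl pderiv_0 pderiv_eq_0_iff poly_0)
    ultimately have "lead_coeff (pderiv q) > 0"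
      by (simp add: lead_coeff_pderiv)
    then obtain n where n: "\<forall>x\<ge>n. poly (pderiv q) x \<ge> lead_coeff (pderiv q)"
      using poly_pinfty_gt_lc by blast
    obtain d where d: "d > 0" "\<forall>h>0. h < d \<longrightarrow> poly (pderiv q) (t + h) < poly (pderiv q) t"
      using DERIV_neg_dec_right[OF poly_DERIV max(2)] by blast
    have "poly (pderiv q) (t + d / 2) < 0"
      using d crit by simp
    moreover have "poly (pderiv q) (max n (t + d)) > 0"
      using n \<open>lead_coeff (pderiv q) > 0\<close> by (meson max.cobounded1 less_le_trans)
    ultimately obtain x where "t + d / 2 < x" "poly (pderiv q) x = 0"
      using poly_IVT_pos[of "t + d / 2" "max n (t + d)"] d(1) by force
    with d(1) no_crit show False
      by force
  qed
  show ?thesis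
  proof (cases "poly Q t > 0")
    case True
    with assms show ?thesis
      by (intro root_if_max) (auto simp: mult_less_0_iff)
  next
    case False
    with assms have "\<exists>x>t. poly (-Q) x = 0 \<or> poly (pderiv (-Q)) x = 0"
      by (intro root_if_max) (auto simp: pderiv_minus mult_less_0_iff)
    then show ?thesis
      by (simp add: pderiv_minus)
  qed
qed

lemma poly_root_left_of_critical_point:
  fixes Q :: "real poly"
  assumes "poly (pderiv Q) t = 0" "poly Q t * poly (pderiv (pderiv Q)) t < 0"
  shows "\<exists>x<t. poly Q x = 0 \<or> poly (pderiv Q) x = 0"
proof -
  let ?R = "pcompose Q [:0, -1:]"
  have eval: "poly ?R x = poly Q (-x)" "poly (pderiv ?R) x = - poly (pderiv Q) (-x)"
    "poly (pderiv (pderiv ?R)) x = poly (pderiv (pderiv Q)) (-x)" for x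
    by (simp_all add: poly_pcompose pderiv_pcompose pderiv_pCons pderiv_minus)
  obtain x where "x > -t" "poly ?R x = 0 \<or> poly (pderiv ?R) x = 0"
    using poly_root_right_of_critical_point[of ?R "-t"] assms by (auto simp: eval)
  then show ?thesis
    by (intro exI[of _ "-x"]) (auto simp: eval)
qed

section \<open>Counting the roots of an antiderivative\<close>

lemma card_less_card_if_interleaved:
  fixes T R :: "'a::linorder set"
  assumes "finite R"
    and above: "\<forall>t\<in>T. \<exists>r\<in>R. t < r \<and> (\<forall>t'\<in>T. t < t' \<longrightarrow> r < t')"
    and below: "\<exists>r\<in>R. \<forall>t\<in>T. r < t"
  shows "card T < card R"
proof -
  obtain g where g: "\<forall>t\<in>T. g t \<in> R \<and> t < g t \<and> (\<forall>t'\<in>T. t < t' \<longrightarrow> g t < t')"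
    using above by metis
  obtain r where r: "r \<in> R" "\<forall>t\<in>T. r < t"
    using below by blast
  have "inj_on g T"
    by (rule inj_onI) (metis g linorder_neqE order.asym)
  have "g ` T \<subseteq> R" "r \<notin> g ` T"
    using g r by force+
  then have "finite T"
    using inj_on_finite \<open>inj_on g T\<close> \<open>finite R\<close> by blast
  have "Suc (card T) = card (insert r (g ` T))"
    using \<open>finite T\<close> \<open>r \<notin> g ` T\<close> card_image[OF \<open>inj_on g T\<close>] by simp
  also have "\<dots> \<le> card R"
    using \<open>g ` T \<subseteq> R\<close> r(1) \<open>finite R\<close> by (intro card_mono) auto
  finally show ?thesis
    by simp
qed

lemma card_nonroot_critical_points_less_card_roots:
  fixes Q :: "real poly"
  assumes "pderiv Q \<noteq> 0" "poly (pderiv Q) s = 0"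
    and extrema: "\<And>t. poly (pderiv Q) t = 0 \<Longrightarrow> poly Q t \<noteq> 0 \<Longrightarrow>
      poly Q t * poly (pderiv (pderiv Q)) t < 0"
  shows "card {t. poly (pderiv Q) t = 0 \<and> poly Q t \<noteq> 0} < card {x. poly Q x = 0}"
proof -
  define T R where "T = {t. poly (pderiv Q) t = 0 \<and> poly Q t \<noteq> 0}" and "R = {x. poly Q x = 0}"
  have "finite R"
    using assms(1) by (auto simp: R_def intro: poly_roots_finite)
  have "finite T"
    using poly_roots_finite[OF assms(1)] by (rule rev_finite_subset) (auto simp: T_def)
  have in_T: "poly (pderiv Q) t = 0" "poly Q t * poly (pderiv (pderiv Q)) t < 0" if "t \<in> T" for t
    using that extrema by (auto simp: T_def)
  have in_R: "x \<in> R" if "x \<notin> T" "poly Q x = 0 \<or> poly (pderiv Q) x = 0" for x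
    using that by (auto simp: T_def R_def)
  show ?thesis
    unfolding T_def[symmetric] R_def[symmetric]
  proof (rule card_less_card_if_interleaved[OF \<open>finite R\<close>])
    show "\<forall>t\<in>T. \<exists>r\<in>R. t < r \<and> (\<forall>t'\<in>T. t < t' \<longrightarrow> r < t')"
    proof
      fix t
      assume "t \<in> T"
      show "\<exists>r\<in>R. t < r \<and> (\<forall>t'\<in>T. t < t' \<longrightarrow> r < t')"
      proof (cases "\<exists>t'\<in>T. t < t'")
        case True
        define u where "u = Min {t'\<in>T. t < t'}"
        have U: "finite {t'\<in>T. t < t'}" "{t'\<in>T. t < t'} \<noteq> {}"
          using True \<open>finite T\<close> by auto
        have "u \<in> T" "t < u"
          using Min_in[OF U] by (auto simp: u_def)
        have u_min: "u \<le> t'" if "t' \<in> T" "t < t'" for t'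
          using Min_le[OF U(1)] that by (simp add: u_def)
        obtain x where x: "t < x" "x < u" "poly Q x = 0 \<or> poly (pderiv Q) x = 0"
          using poly_root_between_critical_points[OF \<open>t < u\<close> in_T(1)[OF \<open>t \<in> T\<close>] in_T(1)[OF \<open>u \<in> T\<close>]
              in_T(2)[OF \<open>t \<in> T\<close>] in_T(2)[OF \<open>u \<in> T\<close>]]
          by blast
        then have "x \<notin> T"
          using u_min by force
        with x show ?thesis
          using in_R u_min by (meson less_le_trans)
      next
        case False
        obtain x where "t < x" "poly Q x = 0 \<or> poly (pderiv Q) x = 0"
          using poly_root_right_of_critical_point in_T[OF \<open>t \<in> T\<close>] by blast
        with False in_R show ?thesis
          by (meson less_trans)
      qed
    qed
    show "\<exists>r\<in>R. \<forall>t\<in>T. r < t"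
    proof (cases "T = {}")
      case True
      then show ?thesis
        using in_R[of s] assms(2) by blast
    next
      case False
      define u where "u = Min T"
      have "u \<in> T" and u_min: "\<And>t. t \<in> T \<Longrightarrow> u \<le> t"
        using False \<open>finite T\<close> by (simp_all add: u_def)
      obtain x where x: "x < u" "poly Q x = 0 \<or> poly (pderiv Q) x = 0"
        using poly_root_left_of_critical_point in_T[OF \<open>u \<in> T\<close>] by blast
      then have "x \<notin> T"
        using u_min by force
      with x show ?thesis
        using in_R u_min by (meson less_le_trans)
    qed
  qed
qed

theorem real_rooted_iff_critical_values:
  fixes Q :: "real poly"
  assumes "real_rooted (pderiv Q)" "degree (pderiv Q) > 0"
  shows "real_rooted Q \<longleftrightarrow>
    (\<forall>x. poly (pderiv Q) x = 0 \<longrightarrow> poly Q x \<noteq> 0 \<longrightarrow> poly Q x * poly (pderiv (pderiv Q)) x < 0)"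
proof
  assume "real_rooted Q"
  moreover have "degree Q > 0"
    using assms(2) by (simp add: degree_pderiv)
  ultimately show "\<forall>x. poly (pderiv Q) x = 0 \<longrightarrow> poly Q x \<noteq> 0 \<longrightarrow>
      poly Q x * poly (pderiv (pderiv Q)) x < 0"
    using laguerre_inequality_strict by fastforce
next
  assume extrema: "\<forall>x. poly (pderiv Q) x = 0 \<longrightarrow> poly Q x \<noteq> 0 \<longrightarrow>
      poly Q x * poly (pderiv (pderiv Q)) x < 0"
  define T where "T = {x. poly (pderiv Q) x = 0 \<and> poly Q x \<noteq> 0}"
  have "pderiv Q \<noteq> 0" "Q \<noteq> 0"
    using assms(2) by auto
  obtain s where "poly (pderiv Q) s = 0"
    using real_rooted_has_root assms by blast
  have "(\<Sum>x | poly (pderiv Q) x = 0. order x (pderiv Q)) = degree (pderiv Q)"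
    using real_rooted_iff_sum_order \<open>pderiv Q \<noteq> 0\<close> assms(1) by blast
  moreover have "(\<Sum>x\<in>T. order x (pderiv Q)) = card T"
  proof -
    have "order x (pderiv Q) = 1" if "x \<in> T" for x
    proof -
      from that extrema have "poly (pderiv (pderiv Q)) x \<noteq> 0"
        by (auto simp: T_def)
      with that show ?thesis
        using order_pderiv[OF \<open>pderiv Q \<noteq> 0\<close>, of x] order_0I by (simp add: T_def)
    qed
    then show ?thesis
      by simp
  qed
  moreover have "card T < card {x. poly Q x = 0}"
    unfolding T_def
    using card_nonroot_critical_points_less_card_roots \<open>pderiv Q \<noteq> 0\<close> \<open>poly (pderiv Q) s = 0\<close> extrema
    by blast
  ultimately have "degree Q \<le> (\<Sum>x | poly Q x = 0. order x Q)"
    using sum_order_roots_pderiv[OF \<open>pderiv Q \<noteq> 0\<close>] degree_pderiv[of Q]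
    unfolding T_def by linarith
  then show "real_rooted Q"
    using real_rooted_iff_sum_order[OF \<open>Q \<noteq> 0\<close>] sum_order_le_degree[OF \<open>Q \<noteq> 0\<close>] by linarith
qed

theorem lemma2p5:
  fixes p P :: "real poly" and C :: real
  assumes "degree p > 0"
    and "real_rooted p"
    and "pderiv P = p" and "poly P 0 = 0"
  shows "real_rooted (P + [:C:]) \<longleftrightarrow>
    (\<forall>\<mu>. poly p \<mu> = 0 \<longrightarrow>
       (poly (pderiv p) \<mu> < 0 \<longrightarrow> poly P \<mu> + C \<ge> 0) \<and>
       (poly (pderiv p) \<mu> > 0 \<longrightarrow> poly P \<mu> + C \<le> 0) \<and>
       (poly (pderiv p) \<mu> = 0 \<longrightarrow> poly P \<mu> + C = 0))"
proof -
  have "pderiv (P + [:C:]) = p"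
    using assms(3) by (simp add: pderiv_add pderiv_pCons)
  with assms(1,2) have "real_rooted (P + [:C:]) \<longleftrightarrow>
      (\<forall>\<mu>. poly p \<mu> = 0 \<longrightarrow> poly P \<mu> + C \<noteq> 0 \<longrightarrow> (poly P \<mu> + C) * poly (pderiv p) \<mu> < 0)"
    using real_rooted_iff_critical_values[of "P + [:C:]"] by simp
  moreover have "(c \<noteq> 0 \<longrightarrow> c * d < 0) \<longleftrightarrow>
      (d < 0 \<longrightarrow> c \<ge> 0) \<and> (d > 0 \<longrightarrow> c \<le> 0) \<and> (d = 0 \<longrightarrow> c = 0)" for c d :: real
    by (auto simp: mult_less_0_iff)
  ultimately show ?thesis
    by (simp only:)
qed

end
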